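(* For all integers $k\ge 2$ and $n\ge 1$, $$\mathrm{spt}(k-1)'_{do}(n-1)-\mathrm{spt}k'_{do}(n)=\mathrm{spt}(k-1)'_{do}(n-2k+1)+p'_{do}(n-2k+1),$$ and $$\mathrm{spt}k_{do}(n)+\mathrm{spt}(k-1)_{do}(n-1)=\mathrm{spt}(k-1)_{do}(n-2k+1)+2p_{de}(n-k)+p_{do}(n-2k+1).$$
   Context: For a partition $\pi$, $s(\pi)$ is its smallest part. For $j\ge1$, $\mathrm{Spt}j_{do}(n)$ is the set of partitions $\pi$ of $n$ in which $s(\pi)$ occurs exactly $j$ times and the remaining parts (those larger than $s(\pi)$) are pairwise distinct and each has parity different from that of $s(\pi)$. $B_0(j,n)$ (resp. $B_1(j,n)$) is the number of $\pi\in\mathrm{Spt}j_{do}(n)$ whose number of parts greater than $s(\pi)$ is even (resp. odd). $\mathrm{spt}j_{do}(n)=B_0(j,n)+B_1(j,n)$ and $\mathrm{spt}j'_{do}(n)=B_0(j,n)-B_1(j,n)$; all of these are $0$ for $n\le 0$. $p_{de}(n)$ (resp. $p_{do}(n)$) is the number of partitions of $n$ into distinct even (resp. distinct odd) parts; $p'_{do}(n)$ is the number of partitions of $n$ into distinct odd parts with an even number of parts minus the number with an odd number of parts. These three functions equal $1$ at $n=0$ and $0$ for $n<0$. *)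

theory Defs
  imports Main "HOL-Library.Multiset"
begin

text \<open>Arguments n are integers; all counting functions vanish for n \<le> 0
  (resp. n < 0 for p_de, p_do, p'_do, which equal 1 at n = 0).\<close>

definition is_partition :: "nat \<Rightarrow> nat multiset \<Rightarrow> bool" where
  "is_partition m \<pi> \<longleftrightarrow> (\<forall>x\<in>#\<pi>. 0 < x) \<and> sum_mset \<pi> = m"

definition smallest_part :: "nat multiset \<Rightarrow> nat" where
  "smallest_part \<pi> = Min (set_mset \<pi>)"

definition larger_parts :: "nat multiset \<Rightarrow> nat" where
  "larger_parts \<pi> = size (filter_mset (\<lambda>x. smallest_part \<pi> < x) \<pi>)"

definition Spt_do :: "nat \<Rightarrow> nat \<Rightarrow> nat multiset set" where
  "Spt_do j m = {\<pi>. is_partition m \<pi> \<and> \<pi> \<noteq> {#} \<and>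
      count \<pi> (smallest_part \<pi>) = j \<and>
      (\<forall>x\<in>#\<pi>. smallest_part \<pi> < x \<longrightarrow>
          count \<pi> x = 1 \<and> (odd x \<longleftrightarrow> \<not> odd (smallest_part \<pi>)))}"

definition B0 :: "nat \<Rightarrow> int \<Rightarrow> nat" where
  "B0 j n = (if n \<le> 0 then 0 else card {\<pi> \<in> Spt_do j (nat n). even (larger_parts \<pi>)})"

definition B1 :: "nat \<Rightarrow> int \<Rightarrow> nat" where
  "B1 j n = (if n \<le> 0 then 0 else card {\<pi> \<in> Spt_do j (nat n). odd (larger_parts \<pi>)})"

definition spt_do :: "nat \<Rightarrow> int \<Rightarrow> nat" where
  "spt_do j n = B0 j n + B1 j n"

definition spt'_do :: "nat \<Rightarrow> int \<Rightarrow> int" where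
  "spt'_do j n = int (B0 j n) - int (B1 j n)"

text \<open>Partitions into distinct parts are represented as finite sets of positive naturals.\<close>
definition p_de :: "int \<Rightarrow> nat" where
  "p_de n = (if n < 0 then 0 else
     card {A :: nat set. finite A \<and> (\<forall>x\<in>A. 0 < x \<and> even x) \<and> \<Sum>A = nat n})"

definition p_do :: "int \<Rightarrow> nat" where
  "p_do n = (if n < 0 then 0 else
     card {A :: nat set. finite A \<and> (\<forall>x\<in>A. odd x) \<and> \<Sum>A = nat n})"

definition p'_do :: "int \<Rightarrow> int" where
  "p'_do n = (if n < 0 then 0 else
     int (card {A :: nat set. finite A \<and> (\<forall>x\<in>A. odd x) \<and> \<Sum>A = nat n \<and> even (card A)})
   - int (card {A :: nat set. finite A \<and> (\<forall>x\<in>A. odd x) \<and> \<Sum>A = nat n \<and> odd (card A)}))"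

end

(*
  A partition in Spt j_do(n) is determined by its smallest part s together with the set D of its
  larger parts, all of parity opposite to s.  Split by s: for s = 1, D is a partition of n - j
  into distinct even parts; for s = 2, a partition of n - 2j into distinct odd parts > 1; for
  s \<ge> 3, lowering s by 2 gives the admissible pairs for (j, n - 2j) with s + 1 \<notin> D.  For j + 1
  copies of s \<ge> 3, lowering s by 2 and adding the new part s - 1 gives instead the pairs for
  (j, n - 2j - 1) with s + 1 \<in> D, and flips the parity of |D|.  Applying both decompositions to
  Spt k(n) and Spt (k-1)(n-1), the s \<ge> 3 terms together give Spt (k-1)(n-2k+1), and the odd-part
  terms give the distinct odd partitions of n - 2k + 1, split according to whether 1 is a part.
*)
theory Submission
  imports Defs
begin

lemma card_filter_partition: "finite A \<Longrightarrow> card A = card {x \<in> A. P x} + card {x \<in> A. \<not> P x}"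
  using card_Int_Diff[of A "{x. P x}"] by (simp add: Int_def set_diff_eq)

definition distinct_parts :: "(nat \<Rightarrow> bool) \<Rightarrow> int \<Rightarrow> bool \<Rightarrow> nat set set" where
  "distinct_parts P m e =
     {D. finite D \<and> (\<forall>x\<in>D. P x) \<and> int (\<Sum>D) = m \<and> (even (card D) \<longleftrightarrow> e)}"

lemma finite_distinct_parts: "finite (distinct_parts P m e)"
proof (rule finite_subset)
  show "distinct_parts P m e \<subseteq> Pow {..nat m}"
    by (auto simp: distinct_parts_def simp del: of_nat_sum intro: member_le_sum)
qed simp

lemma distinct_parts_neg: "m < 0 \<Longrightarrow> distinct_parts P m e = {}"
  by (auto simp: distinct_parts_def simp del: of_nat_sum)

lemma distinct_parts_nat:
  "0 \<le> m \<Longrightarrow> distinct_parts P m e =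
     {D. finite D \<and> (\<forall>x\<in>D. P x) \<and> \<Sum>D = nat m \<and> (even (card D) \<longleftrightarrow> e)}"
  by (auto simp: distinct_parts_def simp del: of_nat_sum)

lemma card_distinct_parts_both_parities:
  assumes "0 \<le> m"
  shows "card {D. finite D \<and> (\<forall>x\<in>D. P x) \<and> \<Sum>D = nat m} =
    card (distinct_parts P m True) + card (distinct_parts P m False)"
proof -
  have "{D. finite D \<and> (\<forall>x\<in>D. P x) \<and> \<Sum>D = nat m} =
      distinct_parts P m True \<union> distinct_parts P m False"
    using assms by (auto simp: distinct_parts_nat)
  moreover have "distinct_parts P m True \<inter> distinct_parts P m False = {}"
    by (auto simp: distinct_parts_def)
  ultimately show ?thesis
    by (simp add: card_Un_disjoint finite_distinct_parts)
qed

lemma card_distinct_parts_remove: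
  assumes "P a"
  shows "card (distinct_parts P m e) =
    card (distinct_parts (\<lambda>x. P x \<and> x \<noteq> a) m e) +
    card (distinct_parts (\<lambda>x. P x \<and> x \<noteq> a) (m - int a) (\<not> e))"
proof -
  let ?Q = "\<lambda>x. P x \<and> x \<noteq> a"
  have without_a: "distinct_parts P m e - {D. a \<in> D} = distinct_parts ?Q m e"
    by (auto simp: distinct_parts_def)
  have with_a: "distinct_parts P m e \<inter> {D. a \<in> D} = insert a ` distinct_parts ?Q (m - int a) (\<not> e)"
  proof (intro equalityI subsetI)
    fix D assume "D \<in> distinct_parts P m e \<inter> {D. a \<in> D}"
    then have "D - {a} \<in> distinct_parts ?Q (m - int a) (\<not> e)" and "D = insert a (D - {a})"
      by (auto simp: distinct_parts_def sum.remove card_Diff_singleton_if simp del: of_nat_sum)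
    then show "D \<in> insert a ` distinct_parts ?Q (m - int a) (\<not> e)" by blast
  next
    fix D assume "D \<in> insert a ` distinct_parts ?Q (m - int a) (\<not> e)"
    then show "D \<in> distinct_parts P m e \<inter> {D. a \<in> D}"
      using assms by (auto simp: distinct_parts_def)
  qed
  have "inj_on (insert a) (distinct_parts ?Q (m - int a) (\<not> e))"
    by (rule inj_onI) (auto simp: distinct_parts_def)
  then show ?thesis
    using card_Int_Diff[OF finite_distinct_parts, of P m e "{D. a \<in> D}"]
    by (simp add: with_a without_a card_image)
qed

lemma p_de_eq: "p_de n = card (distinct_parts (\<lambda>x. 0 < x \<and> even x) n True)
    + card (distinct_parts (\<lambda>x. 0 < x \<and> even x) n False)"
  by (simp add: p_de_def distinct_parts_neg card_distinct_parts_both_parities)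

lemma p_do_eq: "p_do n = card (distinct_parts odd n True) + card (distinct_parts odd n False)"
  by (simp add: p_do_def distinct_parts_neg card_distinct_parts_both_parities)

lemma p'_do_eq:
  "p'_do n = int (card (distinct_parts odd n True)) - int (card (distinct_parts odd n False))"
  by (simp add: p'_do_def distinct_parts_neg distinct_parts_nat)

text \<open>The pair (s, D) stands for the partition with j parts s and the parts D; the flag e
  records whether it is counted by B0 or by B1.\<close>
definition spt_pairs :: "nat \<Rightarrow> int \<Rightarrow> bool \<Rightarrow> (nat \<times> nat set) set" where
  "spt_pairs j n e = {(s, D). 0 < s \<and>
     D \<in> distinct_parts (\<lambda>x. s < x \<and> odd x \<noteq> odd s) (n - int (j * s)) e}"

lemma mem_spt_pairs:
  "(s, D) \<in> spt_pairs j n e \<longleftrightarrow> 0 < s \<and> finite D \<and> (\<forall>x\<in>D. s < x \<and> odd x \<noteq> odd s) \<and>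
     int (\<Sum>D) = n - int (j * s) \<and> (even (card D) \<longleftrightarrow> e)"
  by (simp add: spt_pairs_def distinct_parts_def)

lemma finite_spt_pairs:
  assumes "0 < j"
  shows "finite (spt_pairs j n e)"
proof (rule finite_subset)
  have "s \<le> nat n" if "(s, D) \<in> spt_pairs j n e" for s D
  proof -
    have "int (j * s) \<le> n" using that by (auto simp: mem_spt_pairs simp del: of_nat_sum)
    moreover have "s \<le> j * s" using assms by simp
    ultimately show ?thesis by linarith
  qed
  then show "spt_pairs j n e \<subseteq>
      (SIGMA s:{..nat n}. distinct_parts (\<lambda>x. s < x \<and> odd x \<noteq> odd s) (n - int (j * s)) e)"
    by (auto simp: spt_pairs_def)
qed (simp add: finite_distinct_parts)

lemma spt_pairs_nonpos:
  assumes "0 < j" "n \<le> 0"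
  shows "spt_pairs j n e = {}"
proof -
  have "n \<ge> 1" if "(s, D) \<in> spt_pairs j n e" for s D
  proof -
    have "0 < s" "int (\<Sum>D) = n - int (j * s)"
      using that by (simp_all add: mem_spt_pairs del: of_nat_sum)
    moreover have "1 \<le> j * s" using assms(1) \<open>0 < s\<close> by simp
    ultimately show ?thesis by linarith
  qed
  with assms(2) show ?thesis by fastforce
qed

lemma sum_mset_mset_set: "sum_mset (mset_set A) = \<Sum>A"
  by (simp add: sum_unfold_sum_mset)

lemma
  assumes "0 < j" "finite D" "\<forall>x\<in>D. s < x"
  shows smallest_part_replicate_plus_mset_set: "smallest_part (replicate_mset j s + mset_set D) = s"
    and larger_parts_replicate_plus_mset_set:
      "larger_parts (replicate_mset j s + mset_set D) = card D"
proof -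
  show min: "smallest_part (replicate_mset j s + mset_set D) = s"
    unfolding smallest_part_def using assms by (intro Min_eqI) auto
  have "filter_mset (\<lambda>x. s < x) (replicate_mset j s + mset_set D) = mset_set D"
    using assms(2,3) by (intro multiset_eqI) (auto simp: count_mset_set')
  then show "larger_parts (replicate_mset j s + mset_set D) = card D"
    by (simp add: larger_parts_def min)
qed

lemma Spt_do_eq_replicate_plus_mset_set:
  assumes "\<pi> \<in> Spt_do j m"
  shows "\<pi> = replicate_mset j (smallest_part \<pi>) + mset_set (set_mset \<pi> - {smallest_part \<pi>})"
proof (rule multiset_eqI)
  fix x
  have "smallest_part \<pi> \<le> x" if "x \<in># \<pi>"
    using that by (simp add: smallest_part_def)
  then show "count \<pi> x =
      count (replicate_mset j (smallest_part \<pi>) + mset_set (set_mset \<pi> - {smallest_part \<pi>})) x"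
    using assms by (auto simp: Spt_do_def count_mset_set' not_in_iff)
qed

lemma mem_spt_pairs_of_Spt_do:
  assumes "\<pi> \<in> Spt_do j (nat n)" "0 < j" "0 < n"
  shows "(smallest_part \<pi>, set_mset \<pi> - {smallest_part \<pi>}) \<in> spt_pairs j n (even (larger_parts \<pi>))"
proof -
  define s where "s = smallest_part \<pi>"
  define D where "D = set_mset \<pi> - {s}"
  have eq: "\<pi> = replicate_mset j s + mset_set D"
    unfolding s_def D_def using assms(1) by (rule Spt_do_eq_replicate_plus_mset_set)
  have "\<pi> \<noteq> {#}" "\<forall>x\<in>#\<pi>. 0 < x" "sum_mset \<pi> = nat n"
    and big: "\<forall>x\<in>#\<pi>. s < x \<longrightarrow> odd x \<noteq> odd s"
    using assms(1) by (auto simp: Spt_do_def is_partition_def s_def)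
  then have "0 < s"
    by (auto simp: s_def smallest_part_def)
  have "s \<le> x" if "x \<in># \<pi>" for x
    using that by (simp add: s_def smallest_part_def)
  then have "\<forall>x\<in>D. s < x"
    by (force simp: D_def)
  have "finite D" by (simp add: D_def)
  have "j * s + \<Sum>D = nat n"
    using eq \<open>sum_mset \<pi> = nat n\<close> by (simp add: sum_mset_mset_set)
  then have "int (\<Sum>D) = n - int (j * s)"
    using assms(3) by linarith
  moreover have "larger_parts \<pi> = card D"
    using eq larger_parts_replicate_plus_mset_set[OF assms(2) \<open>finite D\<close> \<open>\<forall>x\<in>D. s < x\<close>]
    by simp
  ultimately show ?thesis
    using big \<open>0 < s\<close> \<open>finite D\<close> \<open>\<forall>x\<in>D. s < x\<close> by (auto simp: mem_spt_pairs D_def s_def[symmetric])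
qed

lemma Spt_do_of_mem_spt_pairs:
  assumes "(s, D) \<in> spt_pairs j n e" "0 < j"
  shows "replicate_mset j s + mset_set D \<in> Spt_do j (nat n)"
    and "even (larger_parts (replicate_mset j s + mset_set D)) \<longleftrightarrow> e"
proof -
  let ?\<pi> = "replicate_mset j s + mset_set D"
  have "0 < s" "finite D" and D: "\<forall>x\<in>D. s < x \<and> odd x \<noteq> odd s"
    and sum: "int (\<Sum>D) = n - int (j * s)" and parity: "even (card D) \<longleftrightarrow> e"
    using assms(1) by (auto simp: mem_spt_pairs)
  then have "smallest_part ?\<pi> = s" "larger_parts ?\<pi> = card D"
    using smallest_part_replicate_plus_mset_set larger_parts_replicate_plus_mset_set assms(2)
    by auto
  then show "even (larger_parts ?\<pi>) \<longleftrightarrow> e" using parity by simp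
  have set: "set_mset ?\<pi> = insert s D"
    using assms(2) \<open>finite D\<close> by auto
  have "j * s + \<Sum>D = nat n" using sum by linarith
  then have "is_partition (nat n) ?\<pi>"
    using set \<open>0 < s\<close> D by (auto simp: is_partition_def sum_mset_mset_set)
  moreover have "count ?\<pi> s = j"
    using D \<open>finite D\<close> by (auto simp: count_mset_set')
  moreover have "count ?\<pi> x = 1 \<and> odd x \<noteq> odd s" if "x \<in># ?\<pi>" "s < x" for x
    using that set D \<open>finite D\<close> by auto
  ultimately show "?\<pi> \<in> Spt_do j (nat n)"
    using set \<open>smallest_part ?\<pi> = s\<close> by (auto simp: Spt_do_def)
qed

lemma card_Spt_do_parity:
  assumes "0 < j" "0 < n"
  shows "card {\<pi> \<in> Spt_do j (nat n). even (larger_parts \<pi>) \<longleftrightarrow> e} = card (spt_pairs j n e)"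
proof (rule bij_betw_same_card)
  show "bij_betw (\<lambda>\<pi>. (smallest_part \<pi>, set_mset \<pi> - {smallest_part \<pi>}))
    {\<pi> \<in> Spt_do j (nat n). even (larger_parts \<pi>) \<longleftrightarrow> e} (spt_pairs j n e)"
  proof (rule bij_betw_byWitness[where f' = "\<lambda>(s, D). replicate_mset j s + mset_set D"])
    show "\<forall>p\<in>spt_pairs j n e. (\<lambda>\<pi>. (smallest_part \<pi>, set_mset \<pi> - {smallest_part \<pi>}))
        ((\<lambda>(s, D). replicate_mset j s + mset_set D) p) = p"
      using assms(1) smallest_part_replicate_plus_mset_set by (force simp: mem_spt_pairs)
  qed (use assms mem_spt_pairs_of_Spt_do Spt_do_of_mem_spt_pairs
      Spt_do_eq_replicate_plus_mset_set[symmetric] in auto)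
qed

lemma
  assumes "0 < j"
  shows B0_eq_card_spt_pairs: "B0 j n = card (spt_pairs j n True)"
    and B1_eq_card_spt_pairs: "B1 j n = card (spt_pairs j n False)"
  using card_Spt_do_parity[OF assms, of n True] card_Spt_do_parity[OF assms, of n False]
    spt_pairs_nonpos[OF assms]
  by (auto simp: B0_def B1_def)

lemma card_spt_pairs_fst:
  "card {p \<in> spt_pairs j n e. fst p = s} =
   card (distinct_parts (\<lambda>x. s < x \<and> odd x \<noteq> odd s) (n - int (j * s)) e)" if "0 < s"
proof -
  have "{p \<in> spt_pairs j n e. fst p = s} =
      Pair s ` distinct_parts (\<lambda>x. s < x \<and> odd x \<noteq> odd s) (n - int (j * s)) e"
    using that by (auto simp: spt_pairs_def)
  then show ?thesis by (simp add: card_image inj_on_def)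
qed

lemma card_spt_pairs_fst_1:
  "card {p \<in> spt_pairs j n e. fst p = 1} = card (distinct_parts (\<lambda>x. 0 < x \<and> even x) (n - int j) e)"
proof -
  have "(\<lambda>x::nat. 1 < x \<and> odd x \<noteq> odd (1::nat)) = (\<lambda>x. 0 < x \<and> even x)"
    by (auto simp: fun_eq_iff elim!: evenE)
  then show ?thesis by (simp add: card_spt_pairs_fst)
qed

lemma card_spt_pairs_fst_2:
  "card {p \<in> spt_pairs j n e. fst p = 2} =
   card (distinct_parts (\<lambda>x. odd x \<and> x \<noteq> 1) (n - 2 * int j) e)"
proof -
  have "(\<lambda>x::nat. 2 < x \<and> odd x \<noteq> odd (2::nat)) = (\<lambda>x. odd x \<and> x \<noteq> 1)"
    by (auto simp: fun_eq_iff elim!: oddE)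
  then show ?thesis by (simp add: card_spt_pairs_fst mult.commute)
qed

lemma card_spt_pairs_split_fst:
  assumes "0 < j"
  shows "card (spt_pairs j n e) = card {p \<in> spt_pairs j n e. fst p = 1}
    + card {p \<in> spt_pairs j n e. fst p = 2} + card {p \<in> spt_pairs j n e. 3 \<le> fst p}"
proof -
  let ?A = "{p \<in> spt_pairs j n e. fst p = 1}"
  let ?B = "{p \<in> spt_pairs j n e. fst p = 2}"
  let ?C = "{p \<in> spt_pairs j n e. 3 \<le> fst p}"
  have "spt_pairs j n e = ?A \<union> ?B \<union> ?C"
    by (auto simp: spt_pairs_def)
  then have "card (spt_pairs j n e) = card (?A \<union> ?B \<union> ?C)"
    by (rule arg_cong)
  also have "\<dots> = card ?A + card ?B + card ?C"
    using finite_spt_pairs[OF assms] by (simp add: card_Un_disjoint disjoint_iff)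
  finally show ?thesis .
qed

lemma ball_opposite_parity_above_shift:
  assumes "Suc s \<notin> D"
  shows "(\<forall>x\<in>D. s + 2 < x \<and> odd x \<noteq> odd (s + 2)) \<longleftrightarrow> (\<forall>x\<in>D. s < x \<and> odd x \<noteq> odd s)"
proof (rule ball_cong[OF refl])
  fix x assume "x \<in> D"
  with assms have "x \<noteq> Suc s" by blast
  then show "s + 2 < x \<and> odd x \<noteq> odd (s + 2) \<longleftrightarrow> s < x \<and> odd x \<noteq> odd s"
    by (cases "x = s + 2") auto
qed

lemma mem_spt_pairs_insert_iff:
  assumes "0 < s" "Suc s \<notin> D"
  shows "(s + 2, D) \<in> spt_pairs (Suc j) n e \<longleftrightarrow>
    (s, insert (Suc s) D) \<in> spt_pairs j (n - 2 * int j - 1) (\<not> e)"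
proof (cases "finite D")
  case True
  have "(\<forall>x\<in>D. s + 2 < x \<and> odd x \<noteq> odd (s + 2)) \<longleftrightarrow> (\<forall>x\<in>D. s < x \<and> odd x \<noteq> odd s)"
    using assms(2) by (rule ball_opposite_parity_above_shift)
  moreover have "int (\<Sum>(insert (Suc s) D)) = int (Suc s) + int (\<Sum>D)"
    using True assms(2) by simp
  moreover have "card (insert (Suc s) D) = Suc (card D)"
    using True assms(2) by simp
  moreover have "int (\<Sum>D) = n - int (Suc j * (s + 2)) \<longleftrightarrow>
      int (Suc s) + int (\<Sum>D) = n - 2 * int j - 1 - int (j * s)"
    by (simp add: algebra_simps)
  ultimately show ?thesis
    using assms True unfolding mem_spt_pairs by auto
qed (simp add: mem_spt_pairs)

lemma mem_spt_pairs_shift_iff: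
  assumes "0 < s" "Suc s \<notin> D"
  shows "(s + 2, D) \<in> spt_pairs j n e \<longleftrightarrow> (s, D) \<in> spt_pairs j (n - 2 * int j) e"
proof -
  have "(\<forall>x\<in>D. s + 2 < x \<and> odd x \<noteq> odd (s + 2)) \<longleftrightarrow> (\<forall>x\<in>D. s < x \<and> odd x \<noteq> odd s)"
    using assms(2) by (rule ball_opposite_parity_above_shift)
  moreover have "n - int (j * (s + 2)) = n - 2 * int j - int (j * s)"
    by (simp add: algebra_simps)
  ultimately show ?thesis
    using assms(1) unfolding mem_spt_pairs by auto
qed

lemma obtain_fst_ge3:
  fixes p :: "nat \<times> 'a"
  assumes "3 \<le> fst p"
  obtains s D where "p = (s + 2, D)" "0 < s"
proof -
  obtain t D where "p = (t, D)" by fastforce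
  with assms that[of "t - 2" D] show thesis by simp
qed

lemma card_spt_pairs_Suc_ge3:
  "card {p \<in> spt_pairs (Suc j) n e. 3 \<le> fst p} =
   card {p \<in> spt_pairs j (n - 2 * int j - 1) (\<not> e). Suc (fst p) \<in> snd p}"
proof -
  let ?B = "{p \<in> spt_pairs j (n - 2 * int j - 1) (\<not> e). Suc (fst p) \<in> snd p}"
  let ?g = "\<lambda>(s, D). (s + 2, D - {Suc s})"
  have "{p \<in> spt_pairs (Suc j) n e. 3 \<le> fst p} = ?g ` ?B"
  proof (intro equalityI subsetI)
    fix p assume p: "p \<in> {p \<in> spt_pairs (Suc j) n e. 3 \<le> fst p}"
    then obtain s D where sD: "p = (s + 2, D)" "0 < s"
      using obtain_fst_ge3 by blast
    with p have mem: "(s + 2, D) \<in> spt_pairs (Suc j) n e" by simp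
    then have "\<forall>x\<in>D. s + 2 < x" by (simp add: mem_spt_pairs)
    then have "Suc s \<notin> D" by fastforce
    with mem have "(s, insert (Suc s) D) \<in> ?B"
      using mem_spt_pairs_insert_iff[OF \<open>0 < s\<close>] by simp
    moreover have "p = ?g (s, insert (Suc s) D)" using \<open>Suc s \<notin> D\<close> sD by simp
    ultimately show "p \<in> ?g ` ?B" by blast
  next
    fix p assume "p \<in> ?g ` ?B"
    then obtain s D where sD: "(s, D) \<in> spt_pairs j (n - 2 * int j - 1) (\<not> e)" "Suc s \<in> D"
      and p: "p = (s + 2, D - {Suc s})" by auto
    then have "0 < s" by (simp add: mem_spt_pairs)
    have "insert (Suc s) (D - {Suc s}) = D" using sD(2) by blast
    with sD(1) have "(s + 2, D - {Suc s}) \<in> spt_pairs (Suc j) n e"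
      using mem_spt_pairs_insert_iff[OF \<open>0 < s\<close>, of "D - {Suc s}"] by simp
    then show "p \<in> {p \<in> spt_pairs (Suc j) n e. 3 \<le> fst p}" using p \<open>0 < s\<close> by simp
  qed
  moreover have "inj_on ?g ?B"
    by (rule inj_on_inverseI[where g = "\<lambda>(t, D). (t - 2, insert (t - 1) D)"])
      (clarsimp simp: insert_absorb)
  ultimately show ?thesis by (simp add: card_image)
qed

lemma card_spt_pairs_ge3:
  "card {p \<in> spt_pairs j n e. 3 \<le> fst p} =
   card {p \<in> spt_pairs j (n - 2 * int j) e. Suc (fst p) \<notin> snd p}"
proof -
  let ?B = "{p \<in> spt_pairs j (n - 2 * int j) e. Suc (fst p) \<notin> snd p}"
  let ?g = "\<lambda>(s, D). (s + 2, D)"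
  have "{p \<in> spt_pairs j n e. 3 \<le> fst p} = ?g ` ?B"
  proof (intro equalityI subsetI)
    fix p assume p: "p \<in> {p \<in> spt_pairs j n e. 3 \<le> fst p}"
    then obtain s D where sD: "p = (s + 2, D)" "0 < s"
      using obtain_fst_ge3 by blast
    with p have mem: "(s + 2, D) \<in> spt_pairs j n e" by simp
    then have "\<forall>x\<in>D. s + 2 < x" by (simp add: mem_spt_pairs)
    then have "Suc s \<notin> D" by fastforce
    with mem have "(s, D) \<in> ?B"
      using mem_spt_pairs_shift_iff[OF \<open>0 < s\<close>] by simp
    then show "p \<in> ?g ` ?B" using sD by force
  next
    fix p assume "p \<in> ?g ` ?B"
    then obtain s D where sD: "(s, D) \<in> spt_pairs j (n - 2 * int j) e" "Suc s \<notin> D"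
      and p: "p = (s + 2, D)" by auto
    then have "0 < s" by (simp add: mem_spt_pairs)
    with sD have "(s + 2, D) \<in> spt_pairs j n e"
      using mem_spt_pairs_shift_iff by simp
    then show "p \<in> {p \<in> spt_pairs j n e. 3 \<le> fst p}" using p \<open>0 < s\<close> by simp
  qed
  moreover have "inj_on ?g ?B"
    by (rule inj_onI) clarsimp
  ultimately show ?thesis by (simp add: card_image)
qed

lemma card_spt_pairs_decomp:
  assumes "0 < j"
  shows "card (spt_pairs j n e) = card (distinct_parts (\<lambda>x. 0 < x \<and> even x) (n - int j) e)
    + card (distinct_parts (\<lambda>x. odd x \<and> x \<noteq> 1) (n - 2 * int j) e)
    + card {p \<in> spt_pairs j (n - 2 * int j) e. Suc (fst p) \<notin> snd p}"
  using card_spt_pairs_split_fst[OF assms] card_spt_pairs_fst_1 card_spt_pairs_fst_2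
    card_spt_pairs_ge3
  by simp

lemma card_spt_pairs_Suc_decomp:
  "card (spt_pairs (Suc j) n e) = card (distinct_parts (\<lambda>x. 0 < x \<and> even x) (n - int j - 1) e)
    + card (distinct_parts (\<lambda>x. odd x \<and> x \<noteq> 1) (n - 2 * int j - 2) e)
    + card {p \<in> spt_pairs j (n - 2 * int j - 1) (\<not> e). Suc (fst p) \<in> snd p}"
  using card_spt_pairs_split_fst[of "Suc j" n e] card_spt_pairs_fst_1 card_spt_pairs_fst_2
    card_spt_pairs_Suc_ge3
  by (simp add: algebra_simps)

theorem theorem3p1:
  fixes k :: nat and n :: int
  assumes "k \<ge> 2" and "n \<ge> 1"
  shows "(spt'_do (k - 1) (n - 1) - spt'_do k n
           = spt'_do (k - 1) (n - 2 * int k + 1) + p'_do (n - 2 * int k + 1)) \<and>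
         (spt_do k n + spt_do (k - 1) (n - 1)
           = spt_do (k - 1) (n - 2 * int k + 1) + 2 * p_de (n - int k) + p_do (n - 2 * int k + 1))"
proof -
  obtain j where k: "k = Suc j" and j: "0 < j"
    using assms(1) by (cases k) auto
  define m where "m = n - 2 * int k + 1"
  have shifts: "n - int j - 1 = n - int k" "n - 1 - int j = n - int k"
    "n - 2 * int j - 2 = n - 2 * int k" "m - 1 = n - 2 * int k"
    "n - 2 * int j - 1 = m" "n - 1 - 2 * int j = m"
    by (simp_all add: m_def k)
  note spt_k = card_spt_pairs_Suc_decomp[of j n, unfolded shifts, folded k]
  note spt_j = card_spt_pairs_decomp[OF j, of "n - 1", unfolded shifts]
  have spt_m: "card (spt_pairs j m e) = card {p \<in> spt_pairs j m e. Suc (fst p) \<in> snd p}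
      + card {p \<in> spt_pairs j m e. Suc (fst p) \<notin> snd p}" for e
    using finite_spt_pairs[OF j] by (rule card_filter_partition)
  note odd_m = card_distinct_parts_remove[of odd 1 m, simplified, unfolded shifts]
  show ?thesis
    unfolding m_def[symmetric]
    using spt_k[of True] spt_k[of False] spt_j[of True] spt_j[of False]
      spt_m[of True] spt_m[of False] odd_m[of True] odd_m[of False] j
    by (simp add: spt'_do_def spt_do_def B0_eq_card_spt_pairs B1_eq_card_spt_pairs
        p_de_eq p_do_eq p'_do_eq k)
qed

end
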